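(* Let $r\geq 3$. If a graph $G$ of order $n$ contains a complete subgraph $K_{r+1}$ and has minimum degree $$\delta(G)>\left(\frac{r-1}{r}-\frac{1}{r^{2}(r^{2}-1)}\right)n,$$ then $$js^{(2,r+1,2)}(G)>\frac{n^{r-1}}{r^{r+3}}.$$
   Context: All graphs are finite and simple; $\delta(G)$ is the minimum degree. For an integer $r\geq 2$, $js^{(2,r+1,2)}(G)$ is the maximum, over all edges $uv$ of $G$, of the number of $(r+1)$-cliques of $G$ containing both $u$ and $v$ (and $0$ if $G$ has no edges). *)

theory Defs
  imports Complex_Main
begin

definition simple_graph :: "'a set \<Rightarrow> ('a \<Rightarrow> 'a \<Rightarrow> bool) \<Rightarrow> bool" where
  "simple_graph V E \<longleftrightarrow> finite V \<and> (\<forall>u v. E u v \<longrightarrow> u \<in> V \<and> v \<in> V)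
     \<and> (\<forall>u v. E u v \<longrightarrow> E v u) \<and> (\<forall>v. \<not> E v v)"

definition degree :: "'a set \<Rightarrow> ('a \<Rightarrow> 'a \<Rightarrow> bool) \<Rightarrow> 'a \<Rightarrow> nat" where
  "degree V E v = card {u \<in> V. E v u}"

definition min_degree :: "'a set \<Rightarrow> ('a \<Rightarrow> 'a \<Rightarrow> bool) \<Rightarrow> nat" where
  "min_degree V E = Min (degree V E ` V)"

definition is_clique :: "'a set \<Rightarrow> ('a \<Rightarrow> 'a \<Rightarrow> bool) \<Rightarrow> 'a set \<Rightarrow> bool" where
  "is_clique V E K \<longleftrightarrow> K \<subseteq> V \<and> (\<forall>u\<in>K. \<forall>v\<in>K. u \<noteq> v \<longrightarrow> E u v)"

definition cliques :: "'a set \<Rightarrow> ('a \<Rightarrow> 'a \<Rightarrow> bool) \<Rightarrow> nat \<Rightarrow> 'a set set" where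
  "cliques V E k = {K. is_clique V E K \<and> card K = k}"

text \<open>js^(2,k,2)(G): maximum over edges uv of the number of k-cliques containing u and v
  (0 if there are no edges).\<close>
definition js :: "'a set \<Rightarrow> ('a \<Rightarrow> 'a \<Rightarrow> bool) \<Rightarrow> nat \<Rightarrow> nat" where
  "js V E k = Max (insert 0 {card {K \<in> cliques V E k. u \<in> K \<and> v \<in> K} | u v. u \<in> V \<and> v \<in> V \<and> E u v})"

end

theory Submission
  imports Defs
begin

(* Fix an (r+1)-clique K and let t(w) be the number of neighbours of w in K.  Double counting
   gives sum_w t(w) >= (r+1) delta and identifies sum_w t(w)(t(w)-1) with the sum of the codegrees
   of the ordered pairs of K; as t(w)(t(w)-1) >= 2(r-1) t(w) - r(r-1) at integers, some edge uv of K
   has codegree at least mu = (2(r-1)(r+1) delta - r(r-1) n) / (r(r+1)).  Every vertex misses at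
   most d = n - delta vertices, so choosing the vertices of an (r-1)-clique greedily inside the
   common neighbourhood of u and v yields at least mu (mu - d) ... (mu - (r-2) d) / (r-1)! such
   cliques, each extending uv to an (r+1)-clique.  The minimum degree condition gives
   mu - i d >= (r-2-i) n / r for i < r - 2 and mu - (r-2) d >= n (r^2-2r+2) / (r^3 (r^2-1)),
   and the resulting product beats n^(r-1) / r^(r+3). *)

lemma finite_cliques: "finite V \<Longrightarrow> finite (cliques V E k)"
  unfolding cliques_def is_clique_def by (rule finite_subset[of _ "Pow V"]) auto

lemma cliques_0: "finite V \<Longrightarrow> cliques V E 0 = {{}}"
  unfolding cliques_def is_clique_def by (auto dest: finite_subset)

lemma min_degree_le_degree:
  assumes "finite V" and "x \<in> V"
  shows "min_degree V E \<le> degree V E x"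
  using assms unfolding min_degree_def by simp

lemma degree_le_card: "finite V \<Longrightarrow> degree V E x \<le> card V"
  unfolding degree_def by (rule card_mono) auto

lemma card_non_neighbours_le:
  assumes "finite V" and "w \<in> V"
  shows "real (card {u \<in> V. \<not> E w u}) \<le> real (card V) - real (min_degree V E)"
proof -
  have "{u \<in> V. \<not> E w u} = V - {u \<in> V. E w u}"
    by auto
  then have "card {u \<in> V. \<not> E w u} = card V - degree V E w"
    unfolding degree_def using assms(1) by (simp add: card_Diff_subset)
  then show ?thesis
    using min_degree_le_degree[OF assms] degree_le_card[OF assms(1), of E w] by simp
qed

lemma cliques_Suc_containing:
  assumes G: "simple_graph V E" and "H \<subseteq> V" and "w \<in> H"
  shows "{K \<in> cliques H E (Suc k). w \<in> K} = insert w ` cliques (H \<inter> {u. E w u}) E k"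
proof
  have fin: "finite H" using G assms(2) finite_subset unfolding simple_graph_def by blast
  show "{K \<in> cliques H E (Suc k). w \<in> K} \<subseteq> insert w ` cliques (H \<inter> {u. E w u}) E k"
  proof
    fix K assume K: "K \<in> {K \<in> cliques H E (Suc k). w \<in> K}"
    then have "finite K" using fin unfolding cliques_def is_clique_def by (auto dest: finite_subset)
    then have "K - {w} \<in> cliques (H \<inter> {u. E w u}) E k"
      using K unfolding cliques_def is_clique_def by auto
    moreover have "K = insert w (K - {w})" using K by auto
    ultimately show "K \<in> insert w ` cliques (H \<inter> {u. E w u}) E k" by blast
  qed
  show "insert w ` cliques (H \<inter> {u. E w u}) E k \<subseteq> {K \<in> cliques H E (Suc k). w \<in> K}"
  proof
    fix K' assume "K' \<in> insert w ` cliques (H \<inter> {u. E w u}) E k"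
    then obtain K where K: "K \<in> cliques (H \<inter> {u. E w u}) E k" and K': "K' = insert w K" by blast
    have "finite K" using K fin unfolding cliques_def is_clique_def by (auto dest: finite_subset)
    moreover have "w \<notin> K" using K G unfolding cliques_def is_clique_def simple_graph_def by auto
    ultimately show "K' \<in> {K \<in> cliques H E (Suc k). w \<in> K}"
      using K K' G \<open>w \<in> H\<close> unfolding cliques_def is_clique_def simple_graph_def by auto
  qed
qed

lemma inj_on_insert_cliques_neighbours:
  assumes "\<not> E w w"
  shows "inj_on (insert w) (cliques (H \<inter> {u. E w u}) E k)"
  by (rule inj_onI) (use assms in \<open>auto simp: cliques_def is_clique_def insert_ident\<close>)

lemma card_cliques_Suc_containing:
  assumes G: "simple_graph V E" and "H \<subseteq> V" and "w \<in> H"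
  shows "card {K \<in> cliques H E (Suc k). w \<in> K} = card (cliques (H \<inter> {u. E w u}) E k)"
  using card_image[OF inj_on_insert_cliques_neighbours] G cliques_Suc_containing[OF assms]
  unfolding simple_graph_def by metis

lemma card_cliques_Suc_double_count:
  assumes G: "simple_graph V E" and "H \<subseteq> V"
  shows "Suc k * card (cliques H E (Suc k)) = (\<Sum>w\<in>H. card (cliques (H \<inter> {u. E w u}) E k))"
proof -
  have fin: "finite H" using G assms(2) finite_subset unfolding simple_graph_def by blast
  have "(\<Sum>w\<in>H. card {K \<in> cliques H E (Suc k). w \<in> K}) = Suc k * card (cliques H E (Suc k))"
  proof (rule sum_multicount[OF fin finite_cliques[OF fin]], intro ballI)
    fix K assume "K \<in> cliques H E (Suc k)"
    then have "{w \<in> H. w \<in> K} = K" and "card K = Suc k"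
      unfolding cliques_def is_clique_def by auto
    then show "card {w \<in> H. w \<in> K} = Suc k" by simp
  qed
  then show ?thesis
    using card_cliques_Suc_containing[OF G assms(2)] by simp
qed

lemma card_cliques_containing_edge:
  assumes G: "simple_graph V E" and "E u v"
  shows "card {K \<in> cliques V E (Suc (Suc k)). u \<in> K \<and> v \<in> K}
    = card (cliques (V \<inter> {w. E u w} \<inter> {w. E v w}) E k)"
proof -
  let ?Vu = "V \<inter> {w. E u w}"
  have irrefl: "\<And>x. \<not> E x x" and uV: "u \<in> V" and vVu: "v \<in> ?Vu"
    using G \<open>E u v\<close> unfolding simple_graph_def by auto
  have "{K \<in> cliques V E (Suc (Suc k)). u \<in> K \<and> v \<in> K}
      = {K \<in> insert u ` cliques ?Vu E (Suc k). v \<in> K}"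
    using cliques_Suc_containing[OF G order_refl uV] by blast
  also have "\<dots> = insert u ` {K \<in> cliques ?Vu E (Suc k). v \<in> K}"
    using \<open>E u v\<close> irrefl by auto
  moreover have "inj_on (insert u) {K \<in> cliques ?Vu E (Suc k). v \<in> K}"
    using inj_on_insert_cliques_neighbours[where E = E and w = u and H = V and k = "Suc k"] irrefl
    by (auto intro: inj_on_subset)
  ultimately have "card {K \<in> cliques V E (Suc (Suc k)). u \<in> K \<and> v \<in> K}
      = card {K \<in> cliques ?Vu E (Suc k). v \<in> K}"
    by (simp add: card_image)
  also have "\<dots> = card (cliques (?Vu \<inter> {w. E v w}) E k)"
    using card_cliques_Suc_containing[OF G _ vVu] by blast
  finally show ?thesis .
qed

lemma card_cliques_containing_edge_le_js:
  assumes "simple_graph V E" and "E u v"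
  shows "card {K \<in> cliques V E k. u \<in> K \<and> v \<in> K} \<le> js V E k"
proof -
  let ?A = "{card {K \<in> cliques V E k. u \<in> K \<and> v \<in> K} | u v. u \<in> V \<and> v \<in> V \<and> E u v}"
  have "?A \<subseteq> (\<lambda>(u, v). card {K \<in> cliques V E k. u \<in> K \<and> v \<in> K}) ` (V \<times> V)"
    by auto
  then have "finite ?A"
    using assms(1) unfolding simple_graph_def by (auto dest: finite_subset)
  moreover have "card {K \<in> cliques V E k. u \<in> K \<and> v \<in> K} \<in> ?A"
    using assms unfolding simple_graph_def by blast
  ultimately show ?thesis
    unfolding js_def by (intro Max_ge) auto
qed

(* m (m - d) ... (m - (k-1) d) / k!, which is m choose k for d = 1: the number of k-cliques
   that greedy choice guarantees in an m-set when every vertex misses at most d vertices. *)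
definition greedy_clique_bound :: "real \<Rightarrow> nat \<Rightarrow> real \<Rightarrow> real" where
  "greedy_clique_bound d k m = (\<Prod>i<k. m - real i * d) / fact k"

lemma greedy_clique_bound_Suc:
  "greedy_clique_bound d (Suc k) m = m * greedy_clique_bound d k (m - d) / real (Suc k)"
proof -
  have "(\<Prod>i<Suc k. m - real i * d) = m * (\<Prod>i<k. (m - d) - real i * d)"
    by (subst prod.lessThan_Suc_shift) (simp add: algebra_simps del: prod.lessThan_Suc)
  then show ?thesis unfolding greedy_clique_bound_def by (simp add: field_simps)
qed

lemma greedy_clique_bound_mono:
  assumes "d \<ge> 0" and "(real k - 1) * d \<le> m" and "m \<le> m'"
  shows "greedy_clique_bound d k m \<le> greedy_clique_bound d k m'"
proof -
  have "0 \<le> m - real i * d" if "i < k" for i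
  proof -
    have "real i * d \<le> (real k - 1) * d"
      using that \<open>d \<ge> 0\<close> by (intro mult_right_mono) auto
    then show ?thesis using assms(2) by linarith
  qed
  then have "(\<Prod>i<k. m - real i * d) \<le> (\<Prod>i<k. m' - real i * d)"
    using \<open>m \<le> m'\<close> by (intro prod_mono) auto
  then show ?thesis unfolding greedy_clique_bound_def by (simp add: divide_right_mono)
qed

lemma card_Int_neighbours_ge:
  assumes "finite V" and "H \<subseteq> V"
  shows "card H - card {u \<in> V. \<not> E w u} \<le> card (H \<inter> {u. E w u})"
proof -
  have "H - {u. E w u} \<subseteq> {u \<in> V. \<not> E w u}" using assms(2) by auto
  then have "card (H - {u. E w u}) \<le> card {u \<in> V. \<not> E w u}"
    using assms(1) by (intro card_mono) auto
  moreover have "card H = card (H \<inter> {u. E w u}) + card (H - {u. E w u})"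
    using assms finite_subset by (metis card_Int_Diff)
  ultimately show ?thesis by linarith
qed

lemma card_cliques_ge_greedy_clique_bound:
  assumes G: "simple_graph V E"
    and d: "\<And>w. w \<in> V \<Longrightarrow> real (card {u \<in> V. \<not> E w u}) \<le> d"
    and "H \<subseteq> V" and "(real k - 1) * d \<le> real (card H)"
  shows "greedy_clique_bound d k (real (card H)) \<le> real (card (cliques H E k))"
  using assms(3,4)
proof (induction k arbitrary: H)
  case 0
  have "finite H" using G \<open>H \<subseteq> V\<close> finite_subset unfolding simple_graph_def by blast
  then show ?case by (simp add: greedy_clique_bound_def cliques_0)
next
  case (Suc k)
  let ?m = "real (card H)"
  have IH: "greedy_clique_bound d k (?m - d) \<le> real (card (cliques (H \<inter> {u. E w u}) E k))"
    if "w \<in> H" for w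
  proof -
    have "d \<ge> 0" using d[of w] that Suc.prems(1) by force
    let ?Hw = "H \<inter> {u. E w u}"
    have Hw: "?m - d \<le> real (card ?Hw)"
      using card_Int_neighbours_ge[of V H E w] d[of w] G Suc.prems(1) that
      unfolding simple_graph_def by force
    have k: "(real k - 1) * d \<le> ?m - d"
      using Suc.prems(2) by (simp add: algebra_simps)
    have "greedy_clique_bound d k (?m - d) \<le> greedy_clique_bound d k (real (card ?Hw))"
      using greedy_clique_bound_mono[OF \<open>d \<ge> 0\<close> k Hw] .
    also have "\<dots> \<le> real (card (cliques ?Hw E k))"
      using Hw k Suc.prems(1) by (intro Suc.IH) auto
    finally show ?thesis .
  qed
  have "real (Suc k) * greedy_clique_bound d (Suc k) ?m = (\<Sum>w\<in>H. greedy_clique_bound d k (?m - d))"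
    by (simp add: greedy_clique_bound_Suc)
  also have "\<dots> \<le> (\<Sum>w\<in>H. real (card (cliques (H \<inter> {u. E w u}) E k)))"
    by (rule sum_mono) (rule IH)
  also have "\<dots> = real (Suc k) * real (card (cliques H E (Suc k)))"
    unfolding of_nat_sum[symmetric] card_cliques_Suc_double_count[OF G Suc.prems(1), symmetric]
    by (simp add: algebra_simps)
  finally show ?case by (simp del: of_nat_Suc)
qed

lemma js_ge_greedy_clique_bound:
  assumes G: "simple_graph V E"
    and d: "\<And>w. w \<in> V \<Longrightarrow> real (card {u \<in> V. \<not> E w u}) \<le> d"
    and "E u v" and "(real k - 1) * d \<le> m"
    and "m \<le> real (card (V \<inter> {w. E u w} \<inter> {w. E v w}))"
  shows "greedy_clique_bound d k m \<le> real (js V E (Suc (Suc k)))"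
proof -
  let ?C = "V \<inter> {w. E u w} \<inter> {w. E v w}"
  have "u \<in> V"
    using G \<open>E u v\<close> unfolding simple_graph_def by blast
  then have "0 \<le> d"
    using d[of u] by (meson of_nat_0_le_iff order_trans)
  have "greedy_clique_bound d k m \<le> greedy_clique_bound d k (real (card ?C))"
    using greedy_clique_bound_mono[OF \<open>0 \<le> d\<close> assms(4,5)] .
  also have "\<dots> \<le> real (card (cliques ?C E k))"
    using assms(4,5) by (intro card_cliques_ge_greedy_clique_bound[OF G d]) auto
  also have "\<dots> = real (card {K \<in> cliques V E (Suc (Suc k)). u \<in> K \<and> v \<in> K})"
    using card_cliques_containing_edge[OF G \<open>E u v\<close>] by simp
  also have "\<dots> \<le> real (js V E (Suc (Suc k)))"
    using card_cliques_containing_edge_le_js[OF G \<open>E u v\<close>] by simp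
  finally show ?thesis .
qed

lemma sum_card_neighbours_in_eq_sum_degree:
  assumes "simple_graph V E" and "finite K"
  shows "(\<Sum>w\<in>V. card {x \<in> K. E w x}) = (\<Sum>x\<in>K. degree V E x)"
proof (rule sum_multicount_gen)
  show "finite V" using assms(1) unfolding simple_graph_def by blast
  have "{w \<in> V. E w x} = {u \<in> V. E x u}" for x
    using assms(1) unfolding simple_graph_def by blast
  then show "\<forall>x\<in>K. card {w \<in> V. E w x} = degree V E x"
    unfolding degree_def by simp
qed (rule assms(2))

lemma sum_codegrees:
  assumes "finite V" and "finite K"
  shows "(\<Sum>u\<in>K. \<Sum>v\<in>K - {u}. card {w \<in> V. E w u \<and> E w v})
    = (\<Sum>w\<in>V. card {x \<in> K. E w x} * (card {x \<in> K. E w x} - 1))"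
proof -
  have "(\<Sum>u\<in>K. \<Sum>v\<in>K - {u}. card {w \<in> V. E w u \<and> E w v})
      = (\<Sum>u\<in>K. \<Sum>w\<in>V. card {v \<in> K - {u}. E w u \<and> E w v})"
    using assms by (intro sum.cong refl sum_multicount_gen) auto
  also have "\<dots> = (\<Sum>w\<in>V. \<Sum>u\<in>K. card {v \<in> K - {u}. E w u \<and> E w v})"
    by (rule sum.swap)
  also have "\<dots> = (\<Sum>w\<in>V. card {x \<in> K. E w x} * (card {x \<in> K. E w x} - 1))"
  proof (rule sum.cong[OF refl])
    fix w
    let ?T = "{x \<in> K. E w x}"
    have "{v \<in> K - {u}. E w u \<and> E w v} = (if u \<in> ?T then ?T - {u} else {})" if "u \<in> K" for u
      using that by auto
    then have "(\<Sum>u\<in>K. card {v \<in> K - {u}. E w u \<and> E w v})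
        = (\<Sum>u\<in>K. if u \<in> ?T then card (?T - {u}) else 0)"
      by (intro sum.cong) auto
    also have "\<dots> = (\<Sum>u\<in>?T. card (?T - {u}))"
      using assms(2) by (simp add: sum.inter_filter[symmetric])
    also have "\<dots> = card ?T * (card ?T - 1)"
      using assms(2) by simp
    finally show "(\<Sum>u\<in>K. card {v \<in> K - {u}. E w u \<and> E w v}) = card ?T * (card ?T - 1)" .
  qed
  finally show ?thesis .
qed

(* No integer lies strictly between r - 1 and r, so at every integer the convex function x (x - 1)
   lies above its secant through these two points. *)
lemma secant_le_mult_pred:
  fixes r t :: nat
  shows "2 * (real r - 1) * real t - real r * (real r - 1) \<le> real (t * (t - 1))"
proof -
  have "real (t * (t - 1)) = real t * (real t - 1)"
    by (cases t) (auto simp: algebra_simps)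
  moreover have "0 \<le> (real t - (real r - 1)) * (real t - real r)"
  proof (cases "t < r")
    case True
    then have "real t \<le> real r - 1" by linarith
    then show ?thesis by (intro mult_nonpos_nonpos) auto
  next
    case False
    then show ?thesis by (intro mult_nonneg_nonneg) auto
  qed
  ultimately show ?thesis by (simp add: algebra_simps)
qed

lemma sum_codegrees_ge:
  assumes G: "simple_graph V E" and "K \<subseteq> V" and "card K = Suc r" and "r \<ge> 1"
    and deg: "\<And>x. x \<in> V \<Longrightarrow> \<delta> \<le> real (degree V E x)"
  shows "2 * (real r - 1) * (real r + 1) * \<delta> - real r * (real r - 1) * real (card V)
    \<le> (\<Sum>u\<in>K. \<Sum>v\<in>K - {u}. real (card {w \<in> V. E w u \<and> E w v}))"
proof -
  let ?t = "\<lambda>w. card {x \<in> K. E w x}"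
  have finV: "finite V"
    using G unfolding simple_graph_def by blast
  then have finK: "finite K"
    using \<open>K \<subseteq> V\<close> finite_subset by blast
  have "(real r + 1) * \<delta> = (\<Sum>x\<in>K. \<delta>)"
    using \<open>card K = Suc r\<close> by (simp add: algebra_simps)
  also have "\<dots> \<le> (\<Sum>x\<in>K. real (degree V E x))"
    using deg \<open>K \<subseteq> V\<close> by (intro sum_mono) auto
  also have "\<dots> = (\<Sum>w\<in>V. real (?t w))"
    unfolding of_nat_sum[symmetric] sum_card_neighbours_in_eq_sum_degree[OF G finK] ..
  finally have sum_t: "(real r + 1) * \<delta> \<le> (\<Sum>w\<in>V. real (?t w))" .
  have "2 * (real r - 1) * (real r + 1) * \<delta> - real r * (real r - 1) * real (card V)
      \<le> 2 * (real r - 1) * (\<Sum>w\<in>V. real (?t w)) - real (card V) * (real r * (real r - 1))"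
    using mult_left_mono[OF sum_t, of "2 * (real r - 1)"] \<open>r \<ge> 1\<close> by (simp add: mult.assoc)
  also have "\<dots> = (\<Sum>w\<in>V. 2 * (real r - 1) * real (?t w) - real r * (real r - 1))"
    by (simp add: sum_subtractf sum_distrib_left)
  also have "\<dots> \<le> (\<Sum>w\<in>V. real (?t w * (?t w - 1)))"
    by (rule sum_mono) (rule secant_le_mult_pred)
  also have "\<dots> = (\<Sum>u\<in>K. \<Sum>v\<in>K - {u}. real (card {w \<in> V. E w u \<and> E w v}))"
    unfolding of_nat_sum[symmetric] sum_codegrees[OF finV finK] ..
  finally show ?thesis .
qed

lemma clique_has_edge_with_large_codegree:
  assumes G: "simple_graph V E" and K: "K \<in> cliques V E (Suc r)" and "r \<ge> 1"
    and deg: "\<And>x. x \<in> V \<Longrightarrow> \<delta> \<le> real (degree V E x)"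
  obtains u v where "E u v"
    and "(2 * (real r - 1) * (real r + 1) * \<delta> - real r * (real r - 1) * real (card V))
        / (real r * (real r + 1))
      \<le> real (card (V \<inter> {w. E u w} \<inter> {w. E v w}))"
proof -
  let ?\<mu> = "(2 * (real r - 1) * (real r + 1) * \<delta> - real r * (real r - 1) * real (card V))
        / (real r * (real r + 1))"
  let ?P = "SIGMA u:K. K - {u}"
  let ?c = "\<lambda>(u, v). real (card {w \<in> V. E w u \<and> E w v})"
  have KV: "K \<subseteq> V" and cardK: "card K = Suc r"
    and edges: "\<And>u v. (u, v) \<in> ?P \<Longrightarrow> E u v"
    using K unfolding cliques_def is_clique_def by auto
  have finK: "finite K"
    using G KV finite_subset unfolding simple_graph_def by blast
  have "card ?P = r * (r + 1)"
    using finK cardK by simp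
  then have "real (card ?P) = real r * (real r + 1)"
    by (simp add: algebra_simps)
  moreover have "real r * (real r + 1) \<noteq> 0"
    using \<open>r \<ge> 1\<close> by simp
  ultimately have "real (card ?P) * ?\<mu>
      = 2 * (real r - 1) * (real r + 1) * \<delta> - real r * (real r - 1) * real (card V)"
    by (simp only: times_divide_eq_right nonzero_mult_div_cancel_left not_False_eq_True)
  also have "\<dots> \<le> (\<Sum>u\<in>K. \<Sum>v\<in>K - {u}. real (card {w \<in> V. E w u \<and> E w v}))"
    by (rule sum_codegrees_ge[OF G KV cardK \<open>r \<ge> 1\<close> deg])
  also have "\<dots> = sum ?c ?P"
    using finK by (simp add: sum.Sigma)
  finally have "real (card ?P) * ?\<mu> \<le> sum ?c ?P" .
  moreover have "card ?P > 0"
    using \<open>card ?P = r * (r + 1)\<close> \<open>r \<ge> 1\<close> by simp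
  ultimately obtain u v where "(u, v) \<in> ?P" and "?\<mu> \<le> ?c (u, v)"
    using sum_bounded_above_strict[of ?P ?c ?\<mu>] by force
  moreover have "{w \<in> V. E w u \<and> E w v} = V \<inter> {w. E u w} \<inter> {w. E v w}"
    using G unfolding simple_graph_def by blast
  ultimately have "E u v" and "?\<mu> \<le> real (card (V \<inter> {w. E u w} \<inter> {w. E v w}))"
    using edges by simp_all
  then show thesis
    by (rule that)
qed

lemma greedy_clique_bound_Suc_ge:
  assumes "0 \<le> a" and "0 \<le> b"
    and steps: "\<And>i. i < q \<Longrightarrow> real (q - i) * a \<le> m - real i * d"
    and last: "b \<le> m - real q * d"
  shows "a ^ q * b / real (Suc q) \<le> greedy_clique_bound d (Suc q) m"
proof -
  have "fact q * a ^ q = (\<Prod>i<q. real (q - i) * a)"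
    by (simp add: prod.distrib fact_prod_rev atLeast0LessThan)
  also have "\<dots> \<le> (\<Prod>i<q. m - real i * d)"
    using steps \<open>0 \<le> a\<close> by (intro prod_mono) auto
  finally have prod: "fact q * a ^ q \<le> (\<Prod>i<q. m - real i * d)" .
  moreover have "0 \<le> fact q * a ^ q"
    using \<open>0 \<le> a\<close> by simp
  ultimately have "fact q * a ^ q * b \<le> (\<Prod>i<q. m - real i * d) * (m - real q * d)"
    using last \<open>0 \<le> b\<close> by (intro mult_mono) auto
  then have "fact q * a ^ q * b \<le> (\<Prod>i<Suc q. m - real i * d)"
    by simp
  then have "fact q * a ^ q * b / fact (Suc q) \<le> greedy_clique_bound d (Suc q) m"
    unfolding greedy_clique_bound_def by (intro divide_right_mono) auto
  then show ?thesis
    by (simp add: field_simps del: of_nat_Suc)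
qed

lemma codegree_bound_sub_mult_ge:
  fixes R N \<delta> i :: real
  assumes "R \<ge> 3" and "N \<ge> 0" and "\<delta> > ((R - 1) / R - 1 / (R^2 * (R^2 - 1))) * N"
    and "0 \<le> i" and "i \<le> R - 2"
  shows "(R - 2 - i) * (N / R) + N * (R^2 - 2*R + 2) / (R^3 * (R^2 - 1))
    \<le> (2 * (R - 1) * (R + 1) * \<delta> - R * (R - 1) * N) / (R * (R + 1)) - i * (N - \<delta>)"
proof -
  define s where "s = R^2 - 1"
  have "s > 0"
    unfolding s_def using assms(1) by simp
  moreover have "R > 0" and "R * (R + 1) > 0"
    using assms(1) by auto
  ultimately have "(2 * (R - 1) * (R + 1) * \<delta> - R * (R - 1) * N) / (R * (R + 1)) - i * (N - \<delta>)
      = N * (R^2 - 2*R + 2) / (R^3 * s) + (R - 2 - i) * (N / R + N / (R^2 * s))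
        + (2 * (R - 1) / R + i) * (\<delta> - ((R - 1) / R - 1 / (R^2 * s)) * N)"
    by (simp add: field_simps) (simp only: s_def; algebra)
  moreover have "0 \<le> (R - 2 - i) * (N / (R^2 * s))"
    using \<open>s > 0\<close> assms by simp
  moreover have "0 \<le> (2 * (R - 1) / R + i) * (\<delta> - ((R - 1) / R - 1 / (R^2 * s)) * N)"
    using \<open>R > 0\<close> assms unfolding s_def by simp
  ultimately show ?thesis
    unfolding s_def by (simp add: algebra_simps)
qed

lemma power_div_lt_greedy_estimate:
  fixes r :: nat and N :: real
  assumes "r \<ge> 3" and "N > 0"
  shows "N ^ (r - 1) / real r ^ (r + 3)
    < (N / real r) ^ (r - 2) * (N * (real r^2 - 2 * real r + 2) / (real r^3 * (real r^2 - 1))) / (real r - 1)"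
proof -
  define R where "R = real r"
  define s where "s = R^2 - 1"
  have "R \<ge> 3" unfolding R_def using assms(1) by simp
  then have "s > 0" and "R > 1"
    unfolding s_def by simp_all
  have "(R - 1) * s < R^2 * (R^2 - 2*R + 2)"
  proof -
    have "R^2 * (R^2 - 2*R + 2) - (R - 1) * s = R^3 * (R - 3) + 3 * R^2 + R - 1"
      unfolding s_def by (simp add: algebra_simps power2_eq_square power3_eq_cube)
    moreover have "R^3 * (R - 3) \<ge> 0" and "R^2 \<ge> 0"
      using \<open>R \<ge> 3\<close> by simp_all
    ultimately show ?thesis using \<open>R \<ge> 3\<close> by linarith
  qed
  define F where "F = R^2 * (R^2 - 2*R + 2) / ((R - 1) * s)"
  have "1 < F"
    unfolding F_def using \<open>(R - 1) * s < _\<close> \<open>s > 0\<close> \<open>R > 1\<close> by simp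
  obtain q where "r = q + 2"
    using assms(1) by (intro that[of "r - 2"]) simp
  then have "N ^ (r - 1) / R ^ (r + 3) = (N / R) ^ (r - 2) * (N / R^5 * 1)"
    by (simp add: power_add power_divide mult_ac)
  also have "\<dots> < (N / R) ^ (r - 2) * (N / R^5 * F)"
    using \<open>N > 0\<close> \<open>R > 1\<close> by (intro mult_strict_left_mono \<open>1 < F\<close>) simp_all
  also have "\<dots> = (N / R) ^ (r - 2) * (N * (R^2 - 2*R + 2) / (R^3 * s)) / (R - 1)"
    unfolding F_def using \<open>s > 0\<close> \<open>R > 1\<close> by (simp add: field_simps eval_nat_numeral)
  finally show ?thesis
    unfolding R_def s_def .
qed

lemma greedy_clique_bound_at_codegree_gt:
  fixes r :: nat and N \<delta> :: real
  defines "\<mu> \<equiv> (2 * (real r - 1) * (real r + 1) * \<delta> - real r * (real r - 1) * N)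
    / (real r * (real r + 1))"
  assumes "r \<ge> 3" and "N > 0"
    and "\<delta> > ((real r - 1) / real r - 1 / (real r^2 * (real r^2 - 1))) * N"
  shows "(real (r - 1) - 1) * (N - \<delta>) \<le> \<mu>"
    and "N ^ (r - 1) / real r ^ (r + 3) < greedy_clique_bound (N - \<delta>) (r - 1) \<mu>"
proof -
  define g where "g = N * (real r^2 - 2 * real r + 2) / (real r^3 * (real r^2 - 1))"
  obtain q where r: "r = q + 2"
    using \<open>r \<ge> 3\<close> by (intro that[of "r - 2"]) simp
  have steps: "(real q - real i) * (N / real r) + g \<le> \<mu> - real i * (N - \<delta>)" if "i \<le> q" for i
    using codegree_bound_sub_mult_ge[of "real r" N \<delta> "real i"] assms that
    unfolding \<mu>_def g_def r by simp
  have "real r^2 - 2 * real r + 2 = (real r - 1)^2 + 1"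
    by (simp add: power2_eq_square algebra_simps)
  then have "0 \<le> real r^2 - 2 * real r + 2"
    by (metis add_nonneg_nonneg zero_le_one zero_le_power2)
  moreover have "1 < real r^2"
    using \<open>r \<ge> 3\<close> by simp
  ultimately have "0 \<le> g"
    unfolding g_def using \<open>N > 0\<close> by simp
  show "(real (r - 1) - 1) * (N - \<delta>) \<le> \<mu>"
    using steps[of q] \<open>0 \<le> g\<close> unfolding r by simp
  have "N ^ (r - 1) / real r ^ (r + 3) < (N / real r) ^ q * g / real (Suc q)"
    using power_div_lt_greedy_estimate[OF \<open>r \<ge> 3\<close> \<open>N > 0\<close>] unfolding g_def r by simp
  also have "\<dots> \<le> greedy_clique_bound (N - \<delta>) (Suc q) \<mu>"
  proof (rule greedy_clique_bound_Suc_ge)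
    show "real (q - i) * (N / real r) \<le> \<mu> - real i * (N - \<delta>)" if "i < q" for i
      using steps[of i] that \<open>0 \<le> g\<close> by simp
  qed (use steps[of q] \<open>0 \<le> g\<close> \<open>N > 0\<close> in simp_all)
  finally show "N ^ (r - 1) / real r ^ (r + 3) < greedy_clique_bound (N - \<delta>) (r - 1) \<mu>"
    unfolding r by simp
qed

theorem lemma5:
  fixes V :: "'a set" and E :: "'a \<Rightarrow> 'a \<Rightarrow> bool" and r n :: nat
  assumes "simple_graph V E"
    and "card V = n"
    and "r \<ge> 3"
    and "cliques V E (r + 1) \<noteq> {}"
    and "real (min_degree V E) > ((real r - 1) / real r - 1 / (real r ^ 2 * (real r ^ 2 - 1))) * real n"
  shows "real (js V E (r + 1)) > real n ^ (r - 1) / real r ^ (r + 3)"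
proof -
  obtain K where K: "K \<in> cliques V E (Suc r)"
    using assms(4) by auto
  have finV: "finite V" and "V \<noteq> {}"
    using assms(1) K unfolding simple_graph_def cliques_def is_clique_def by auto
  then have "real n > 0"
    using assms(2) by auto
  note arith = greedy_clique_bound_at_codegree_gt[OF assms(3) \<open>real n > 0\<close> assms(5)]
  obtain u v where "E u v"
    and codegree: "(2 * (real r - 1) * (real r + 1) * real (min_degree V E) - real r * (real r - 1) * real n)
        / (real r * (real r + 1))
      \<le> real (card (V \<inter> {w. E u w} \<inter> {w. E v w}))"
    using clique_has_edge_with_large_codegree[OF assms(1) K, of "real (min_degree V E)"]
      min_degree_le_degree[OF finV] assms(2,3) by auto
  have "\<And>w. w \<in> V \<Longrightarrow> real (card {u \<in> V. \<not> E w u}) \<le> real n - real (min_degree V E)"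
    using card_non_neighbours_le[OF finV] assms(2) by blast
  note js_bound = js_ge_greedy_clique_bound[OF assms(1) this \<open>E u v\<close> arith(1) codegree]
  have "Suc (Suc (r - 1)) = r + 1"
    using assms(3) by simp
  then show ?thesis
    using arith(2) js_bound by simp
qed

end
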